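(* Let $G$ be a crossing closed graph on $[n]$. Then $G$ is upper crossing closed if and only if $G$ contains no obstruction as a subgraph.
   Context: Graphs are finite simple graphs with vertex set $[n]$; edges are written $ij$ with $i<j$. Two edges $a_1a_2$ and $b_1b_2$ cross if $a_1<b_1<a_2<b_2$ or $b_1<a_1<b_2<a_2$. Two crossing edges $e,f$ are crossing closed if among all induced connected subgraphs of $G$ containing $e$ and $f$ there is a unique minimal one under containment, denoted $J(e,f)$; $G$ is crossing closed if all pairs of crossing edges are. $G$ is upper crossing closed if it is crossing closed and there is a total order $\unlhd$ on $E(G)$ such that for every pair of crossing edges $e,f$, $J(e,f)$ contains an edge $h$ with $h\lhd e$ and $h\lhd f$. For crossing closed $G$, a subgraph $H$ of $G$ is an obstruction if for every edge $e$ of $H$ there is an edge $f$ of $H$ crossing $e$ with $J(e,f)\subseteq H$. *)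

theory Defs
  imports Main
begin

definition graph_on :: "nat \<Rightarrow> (nat \<times> nat) set \<Rightarrow> bool" where
  "graph_on n E \<longleftrightarrow> (\<forall>(i,j)\<in>E. 1 \<le> i \<and> i < j \<and> j \<le> n)"

definition crosses :: "nat \<times> nat \<Rightarrow> nat \<times> nat \<Rightarrow> bool" where
  "crosses e f \<longleftrightarrow> (case e of (a1,a2) \<Rightarrow> case f of (b1,b2) \<Rightarrow>
      (a1 < b1 \<and> b1 < a2 \<and> a2 < b2) \<or> (b1 < a1 \<and> a1 < b2 \<and> b2 < a2))"

definition induced_edges :: "(nat \<times> nat) set \<Rightarrow> nat set \<Rightarrow> (nat \<times> nat) set" where
  "induced_edges E S = {(i,j) \<in> E. i \<in> S \<and> j \<in> S}"

definition connected_induced :: "(nat \<times> nat) set \<Rightarrow> nat set \<Rightarrow> bool" where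
  "connected_induced E S \<longleftrightarrow> S \<noteq> {} \<and>
     (\<forall>u\<in>S. \<forall>v\<in>S. (u,v) \<in> (induced_edges E S \<union> (induced_edges E S)\<inverse>)\<^sup>*)"

text \<open>Vertex sets S of induced connected subgraphs of G containing edges e and f.
  (Induced subgraphs are determined by, and ordered by containment exactly as, their vertex sets.)\<close>
definition joins :: "nat \<Rightarrow> (nat \<times> nat) set \<Rightarrow> nat \<times> nat \<Rightarrow> nat \<times> nat \<Rightarrow> nat set \<Rightarrow> bool" where
  "joins n E e f S \<longleftrightarrow> S \<subseteq> {1..n} \<and> connected_induced E S \<and>
     e \<in> induced_edges E S \<and> f \<in> induced_edges E S"

definition minimal_join :: "nat \<Rightarrow> (nat \<times> nat) set \<Rightarrow> nat \<times> nat \<Rightarrow> nat \<times> nat \<Rightarrow> nat set \<Rightarrow> bool" where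
  "minimal_join n E e f S \<longleftrightarrow> joins n E e f S \<and> (\<forall>T. joins n E e f T \<and> T \<subseteq> S \<longrightarrow> T = S)"

definition pair_crossing_closed :: "nat \<Rightarrow> (nat \<times> nat) set \<Rightarrow> nat \<times> nat \<Rightarrow> nat \<times> nat \<Rightarrow> bool" where
  "pair_crossing_closed n E e f \<longleftrightarrow> (\<exists>!S. minimal_join n E e f S)"

definition J_vertices :: "nat \<Rightarrow> (nat \<times> nat) set \<Rightarrow> nat \<times> nat \<Rightarrow> nat \<times> nat \<Rightarrow> nat set" where
  "J_vertices n E e f = (THE S. minimal_join n E e f S)"

definition J_edges :: "nat \<Rightarrow> (nat \<times> nat) set \<Rightarrow> nat \<times> nat \<Rightarrow> nat \<times> nat \<Rightarrow> (nat \<times> nat) set" where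
  "J_edges n E e f = induced_edges E (J_vertices n E e f)"

definition crossing_closed :: "nat \<Rightarrow> (nat \<times> nat) set \<Rightarrow> bool" where
  "crossing_closed n E \<longleftrightarrow> (\<forall>e\<in>E. \<forall>f\<in>E. crosses e f \<longrightarrow> pair_crossing_closed n E e f)"

text \<open>R is the strict part of a total order on E(G); (h,e) \<in> R means h \<lhd> e.\<close>
definition upper_crossing_closed :: "nat \<Rightarrow> (nat \<times> nat) set \<Rightarrow> bool" where
  "upper_crossing_closed n E \<longleftrightarrow> crossing_closed n E \<and>
     (\<exists>R. R \<subseteq> E \<times> E \<and> strict_linear_order_on E R \<and>
        (\<forall>e\<in>E. \<forall>f\<in>E. crosses e f \<longrightarrow> (\<exists>h\<in>J_edges n E e f. (h,e) \<in> R \<and> (h,f) \<in> R)))"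

definition obstruction :: "nat \<Rightarrow> (nat \<times> nat) set \<Rightarrow> nat set \<Rightarrow> (nat \<times> nat) set \<Rightarrow> bool" where
  "obstruction n E W F \<longleftrightarrow> W \<subseteq> {1..n} \<and> F \<subseteq> E \<and> (\<forall>(i,j)\<in>F. i \<in> W \<and> j \<in> W) \<and> F \<noteq> {} \<and>
     (\<forall>e\<in>F. \<exists>f\<in>F. crosses e f \<and> J_vertices n E e f \<subseteq> W \<and> J_edges n E e f \<subseteq> F)"

end

theory Submission
  imports Defs
begin

text \<open>If edges are ordered so that every crossing pair e, f has an edge of J(e,f) below both,
  then the least edge e of an obstruction has a partner f with J(e,f) inside the obstruction,
  and J(e,f) contains an edge below e: impossible. Conversely, if there is no obstruction, then
  every nonempty set F of edges contains an edge x such that J(x,f) leaves F for each f in F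
  crossing x. Removing such edges one at a time and ordering them by removal time gives the
  required order: for e removed before f, some edge of J(e,f) was removed earlier still.\<close>

definition obstructing :: "('a \<Rightarrow> 'a \<Rightarrow> bool) \<Rightarrow> ('a \<Rightarrow> 'a \<Rightarrow> 'a set) \<Rightarrow> 'a set \<Rightarrow> bool" where
  "obstructing cross J F \<longleftrightarrow> F \<noteq> {} \<and> (\<forall>e\<in>F. \<exists>f\<in>F. cross e f \<and> J e f \<subseteq> F)"

text \<open>Elements of J e f outside A count as lying below all of A; this relativisation lets an
  order be extended by one new bottom element at a time.\<close>

definition lower_join_order ::
    "('a \<Rightarrow> 'a \<Rightarrow> bool) \<Rightarrow> ('a \<Rightarrow> 'a \<Rightarrow> 'a set) \<Rightarrow> 'a set \<Rightarrow> 'a rel \<Rightarrow> bool" where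
  "lower_join_order cross J A R \<longleftrightarrow> R \<subseteq> A \<times> A \<and> strict_linear_order_on A R \<and>
     (\<forall>e\<in>A. \<forall>f\<in>A. cross e f \<longrightarrow> (\<exists>h\<in>J e f. h \<in> A \<longrightarrow> (h, e) \<in> R \<and> (h, f) \<in> R))"

lemma strict_linear_order_on_insert_bottom:
  assumes "strict_linear_order_on A R" and "R \<subseteq> A \<times> A" and "x \<notin> A"
  shows "strict_linear_order_on (insert x A) (R \<union> {x} \<times> A)"
  using assms unfolding strict_linear_order_on_def trans_def irrefl_def total_on_def
  by blast

lemma lower_join_order_insert_bottom:
  assumes order: "lower_join_order cross J A R" and "x \<notin> A"
    and "symp cross" and "\<And>e f. J e f = J f e"
    and x_unblocked: "\<forall>f\<in>insert x A. cross x f \<longrightarrow> \<not> J x f \<subseteq> insert x A"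
  shows "lower_join_order cross J (insert x A) (R \<union> {x} \<times> A)"
proof -
  have "\<exists>h\<in>J e f. h \<in> insert x A \<longrightarrow> (h, e) \<in> R \<union> {x} \<times> A \<and> (h, f) \<in> R \<union> {x} \<times> A"
    if ef: "e \<in> insert x A" "f \<in> insert x A" "cross e f" for e f
  proof -
    consider "e = x" | "f = x" | "e \<in> A" "f \<in> A"
      using ef by blast
    then show ?thesis
    proof cases
      case 1
      then obtain h where "h \<in> J e f" "h \<notin> insert x A"
        using x_unblocked ef by blast
      then show ?thesis by blast
    next
      case 2
      then have "cross x e" "J e f = J x e"
        using ef assms(3,4) by (auto dest: sympD)
      then obtain h where "h \<in> J e f" "h \<notin> insert x A"
        using x_unblocked ef by blast
      then show ?thesis by blast
    next
      case 3
      then obtain h where "h \<in> J e f" "h \<in> A \<longrightarrow> (h, e) \<in> R \<and> (h, f) \<in> R"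
        using order ef(3) unfolding lower_join_order_def by blast
      then show ?thesis using 3 by blast
    qed
  qed
  moreover have "strict_linear_order_on (insert x A) (R \<union> {x} \<times> A)"
    using order \<open>x \<notin> A\<close> unfolding lower_join_order_def
    by (blast intro: strict_linear_order_on_insert_bottom)
  moreover have "R \<union> {x} \<times> A \<subseteq> insert x A \<times> insert x A"
    using order unfolding lower_join_order_def by blast
  ultimately show ?thesis
    unfolding lower_join_order_def by blast
qed

lemma ex_lower_join_order:
  assumes "finite A" and "symp cross" and "\<And>e f. J e f = J f e"
    and "\<forall>F\<subseteq>A. \<not> obstructing cross J F"
  shows "\<exists>R. lower_join_order cross J A R"
  using assms(1,4)
proof (induction A rule: finite_psubset_induct)
  case (psubset A)
  show ?case
  proof (cases "A = {}")
    case True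
    then have "lower_join_order cross J A {}"
      unfolding lower_join_order_def strict_linear_order_on_def trans_def irrefl_def total_on_def
      by simp
    then show ?thesis ..
  next
    case False
    moreover have "\<not> obstructing cross J A"
      using psubset.prems by blast
    ultimately obtain x where "x \<in> A" and x_unblocked: "\<forall>f\<in>A. cross x f \<longrightarrow> \<not> J x f \<subseteq> A"
      unfolding obstructing_def by blast
    have "A - {x} \<subset> A" and "\<forall>F\<subseteq>A - {x}. \<not> obstructing cross J F"
      using \<open>x \<in> A\<close> psubset.prems by auto
    then obtain R where "lower_join_order cross J (A - {x}) R"
      using psubset.IH by blast
    moreover have "insert x (A - {x}) = A"
      using \<open>x \<in> A\<close> by blast
    ultimately have "lower_join_order cross J A (R \<union> {x} \<times> (A - {x}))"
      using lower_join_order_insert_bottom[of cross J "A - {x}" R x] x_unblocked assms(2,3)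
      by simp
    then show ?thesis ..
  qed
qed

lemma lower_join_order_not_obstructing:
  assumes "lower_join_order cross J A R" and "finite A" and "F \<subseteq> A"
  shows "\<not> obstructing cross J F"
proof
  assume obstr: "obstructing cross J F"
  have R_sub: "R \<subseteq> A \<times> A" and "strict_linear_order_on A R"
    and lower: "\<forall>e\<in>A. \<forall>f\<in>A. cross e f \<longrightarrow> (\<exists>h\<in>J e f. h \<in> A \<longrightarrow> (h, e) \<in> R \<and> (h, f) \<in> R)"
    using assms(1) unfolding lower_join_order_def by auto
  have "finite R"
    using R_sub assms(2) by (blast intro: finite_subset)
  moreover have "acyclic R"
    using \<open>strict_linear_order_on A R\<close> by (simp add: strict_linear_order_on_def acyclic_irrefl)
  ultimately have "wf R"
    by (rule finite_acyclic_wf)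
  moreover have "F \<noteq> {}" using obstr unfolding obstructing_def by blast
  ultimately obtain e where "e \<in> F" and e_least: "\<And>h. (h, e) \<in> R \<Longrightarrow> h \<notin> F"
    by (metis wfE_min ex_in_conv)
  then obtain f where "f \<in> F" "cross e f" "J e f \<subseteq> F"
    using obstr unfolding obstructing_def by blast
  moreover obtain h where "h \<in> J e f" "h \<in> A \<longrightarrow> (h, e) \<in> R"
    using lower \<open>e \<in> F\<close> \<open>f \<in> F\<close> \<open>cross e f\<close> assms(3) by blast
  ultimately show False
    using e_least assms(3) by blast
qed

lemma ex_lower_join_order_iff:
  assumes "finite A" and "symp cross" and "\<And>e f. J e f = J f e"
  shows "(\<exists>R. lower_join_order cross J A R) \<longleftrightarrow> (\<forall>F\<subseteq>A. \<not> obstructing cross J F)"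
proof
  show "\<forall>F\<subseteq>A. \<not> obstructing cross J F" if "\<exists>R. lower_join_order cross J A R"
    using that lower_join_order_not_obstructing[OF _ assms(1)] by blast
  show "\<exists>R. lower_join_order cross J A R" if "\<forall>F\<subseteq>A. \<not> obstructing cross J F"
    using ex_lower_join_order[OF assms that] .
qed

lemma symp_crosses: "symp crosses"
  unfolding symp_def crosses_def by auto

lemma J_edges_sym: "J_edges n E e f = J_edges n E f e"
proof -
  have "joins n E e f = joins n E f e" unfolding joins_def by auto
  then show ?thesis unfolding J_edges_def J_vertices_def minimal_join_def by simp
qed

lemma J_edges_subset: "J_edges n E e f \<subseteq> E"
  unfolding J_edges_def induced_edges_def by auto

lemma J_vertices_subset:
  assumes "crossing_closed n E" and "e \<in> E" "f \<in> E" "crosses e f"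
  shows "J_vertices n E e f \<subseteq> {1..n}"
proof -
  have "\<exists>!S. minimal_join n E e f S"
    using assms unfolding crossing_closed_def pair_crossing_closed_def by blast
  then have "minimal_join n E e f (J_vertices n E e f)"
    unfolding J_vertices_def by (rule theI')
  then show ?thesis unfolding minimal_join_def joins_def by blast
qed

lemma finite_edges:
  assumes "graph_on n E"
  shows "finite E"
proof (rule finite_subset)
  show "E \<subseteq> {1..n} \<times> {1..n}" using assms unfolding graph_on_def by auto
qed simp

lemma upper_crossing_closed_iff_lower_join_order:
  assumes "crossing_closed n E"
  shows "upper_crossing_closed n E \<longleftrightarrow> (\<exists>R. lower_join_order crosses (J_edges n E) E R)"
proof -
  have "(\<exists>h\<in>J_edges n E e f. h \<in> E \<longrightarrow> P h) \<longleftrightarrow> (\<exists>h\<in>J_edges n E e f. P h)" for e f P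
    using J_edges_subset by blast
  then show ?thesis
    using assms unfolding upper_crossing_closed_def lower_join_order_def by simp
qed

text \<open>An obstruction may always be taken with vertex set {1..n}, so only its edges matter.\<close>

lemma ex_obstruction_iff:
  assumes "graph_on n E" and "crossing_closed n E"
  shows "(\<exists>W F. obstruction n E W F) \<longleftrightarrow> (\<exists>F\<subseteq>E. obstructing crosses (J_edges n E) F)"
proof
  assume "\<exists>W F. obstruction n E W F"
  then obtain W F where obstr: "obstruction n E W F"
    by blast
  then have "F \<subseteq> E" and "obstructing crosses (J_edges n E) F"
    unfolding obstruction_def obstructing_def by fast+
  then show "\<exists>F\<subseteq>E. obstructing crosses (J_edges n E) F"
    by blast
next
  assume "\<exists>F\<subseteq>E. obstructing crosses (J_edges n E) F"
  then obtain F where "F \<subseteq> E" and obstr: "obstructing crosses (J_edges n E) F"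
    by blast
  have "\<forall>(i, j)\<in>F. i \<in> {1..n} \<and> j \<in> {1..n}"
    using \<open>F \<subseteq> E\<close> assms(1) unfolding graph_on_def by fastforce
  moreover have "\<forall>e\<in>F. \<exists>f\<in>F. crosses e f \<and> J_vertices n E e f \<subseteq> {1..n} \<and> J_edges n E e f \<subseteq> F"
  proof
    fix e assume "e \<in> F"
    then obtain f where "f \<in> F" "crosses e f" "J_edges n E e f \<subseteq> F"
      using obstr unfolding obstructing_def by blast
    moreover have "J_vertices n E e f \<subseteq> {1..n}"
      using J_vertices_subset[OF assms(2)] \<open>F \<subseteq> E\<close> \<open>e \<in> F\<close> calculation by blast
    ultimately show "\<exists>f\<in>F. crosses e f \<and> J_vertices n E e f \<subseteq> {1..n} \<and> J_edges n E e f \<subseteq> F"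
      by blast
  qed
  ultimately have "obstruction n E {1..n} F"
    using obstr \<open>F \<subseteq> E\<close> unfolding obstruction_def obstructing_def by simp
  then show "\<exists>W F. obstruction n E W F" by blast
qed

theorem theoremA4:
  fixes n :: nat and E :: "(nat \<times> nat) set"
  assumes "graph_on n E" and "crossing_closed n E"
  shows "upper_crossing_closed n E \<longleftrightarrow> \<not> (\<exists>W F. obstruction n E W F)"
proof -
  have "upper_crossing_closed n E \<longleftrightarrow> (\<exists>R. lower_join_order crosses (J_edges n E) E R)"
    using assms(2) by (rule upper_crossing_closed_iff_lower_join_order)
  also have "\<dots> \<longleftrightarrow> (\<forall>F\<subseteq>E. \<not> obstructing crosses (J_edges n E) F)"
    using finite_edges[OF assms(1)] symp_crosses J_edges_sym by (rule ex_lower_join_order_iff)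
  also have "\<dots> \<longleftrightarrow> \<not> (\<exists>W F. obstruction n E W F)"
    using ex_obstruction_iff[OF assms] by blast
  finally show ?thesis .
qed

end
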